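(* Let $p\in\mathbb{T}^{\mathcal{P}([n])}$ be a tropical Plücker vector, and let $L_p\subseteq\mathbb{T}^n$ be its tropical linear space. Under the identification $\mathbb{T}^{\mathcal{J}}\cong\mathbb{T}^n\times\mathbb{T}^n$, $x\mapsto((x_1,\dots,x_n),(x_{1^*},\dots,x_{n^*}))$, we have $\mathcal{C}(p)^\top=L_p\times L_{p^*}$.
   Context: $\mathbb{T}=\mathbb{R}\cup\{\infty\}$; $\mathcal{P}([n])$ the set of subsets of $[n]$. A tropical Wick vector is $p$ such that for all $S,T\subseteq[n]$ the minimum $\min_{i\in S\Delta T}(p_{S\Delta\{i\}}+p_{T\Delta\{i\}})$ is attained at least twice or equals $\infty$; a tropical Plücker vector is a tropical Wick vector whose support sets $\{S:p_S\neq\infty\}$ all have the same size $r_p$. Its dual is $p^*_S=p_{[n]\setminus S}$. Plücker circuits: for $T\subseteq[n]$ with $|T|=r_p+1$ define $d_T\in\mathbb{T}^n$ by $(d_T)_i=p_{T\setminus\{i\}}$ if $i\in T$, $\infty$ otherwise; a Plücker circuit is $d_T+\lambda\mathbf{1}$ ($\lambda\in\mathbb{R}$) with nonempty support. $x,y$ are tropically orthogonal if $\min_k(x_k+y_k)$ is attained at least twice or equals $\infty$. The tropical linear space $L_p\subseteq\mathbb{T}^n$ is the set of vectors tropically orthogonal to all Plücker circuits of $p$. Let $\mathcal{J}=\{1,\dots,n,1^*,\dots,n^*\}$; for $S\subseteq[n]$ let $\bar S=S\cup\{i^*:i\in[n]\setminus S\}$ and $\bar p_{\bar S}:=p_S$.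 For $T\subseteq[n]$, $(c_T)_i=\bar p_{\bar T\Delta\{i,i^*\}}$ if $i\in\bar T$, $\infty$ otherwise; the circuits of $p$ are vectors $c_T+\lambda\mathbf{1}$ with nonempty support, $\mathcal{C}(p)$ is their set, and $\mathcal{C}(p)^\top\subseteq\mathbb{T}^{\mathcal{J}}$ is the set of vectors tropically orthogonal to all of them. *)

theory Defs
  imports "HOL-Library.Extended_Real"
begin

text \<open>The tropical semiring T = R \<union> {\<infinity>} is modelled inside ereal; vectors are
  required to avoid -\<infinity>. Vectors in T^n are functions
  nat \<Rightarrow> ereal of which only the values on [n] matter. The index set J is
  modelled as nat + nat: Inl i stands for i and Inr i stands for i*.\<close>

definition trop :: "ereal \<Rightarrow> bool" where
  "trop a \<longleftrightarrow> a \<noteq> -\<infinity>"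

definition min_twice :: "'a set \<Rightarrow> ('a \<Rightarrow> ereal) \<Rightarrow> bool" where
  "min_twice I f \<longleftrightarrow> (INF i\<in>I. f i) = \<infinity> \<or>
     (\<exists>i\<in>I. \<exists>j\<in>I. i \<noteq> j \<and> f i = (INF k\<in>I. f k) \<and> f j = (INF k\<in>I. f k))"

definition trop_orth :: "'a set \<Rightarrow> ('a \<Rightarrow> ereal) \<Rightarrow> ('a \<Rightarrow> ereal) \<Rightarrow> bool" where
  "trop_orth I x y \<longleftrightarrow> min_twice I (\<lambda>k. x k + y k)"

definition trop_wick :: "nat \<Rightarrow> (nat set \<Rightarrow> ereal) \<Rightarrow> bool" where
  "trop_wick n p \<longleftrightarrow> (\<forall>S. S \<subseteq> {1..n} \<longrightarrow> trop (p S)) \<and>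
     (\<forall>S T. S \<subseteq> {1..n} \<longrightarrow> T \<subseteq> {1..n} \<longrightarrow>
        min_twice (S - T \<union> (T - S)) (\<lambda>i. p ((S - {i}) \<union> ({i} - S)) + p ((T - {i}) \<union> ({i} - T))))"

definition trop_pluecker :: "nat \<Rightarrow> (nat set \<Rightarrow> ereal) \<Rightarrow> bool" where
  "trop_pluecker n p \<longleftrightarrow> trop_wick n p \<and>
     (\<exists>r. \<forall>S. S \<subseteq> {1..n} \<longrightarrow> p S \<noteq> \<infinity> \<longrightarrow> card S = r)"

definition prank :: "nat \<Rightarrow> (nat set \<Rightarrow> ereal) \<Rightarrow> nat" where
  "prank n p = card (SOME S. S \<subseteq> {1..n} \<and> p S \<noteq> \<infinity>)"

definition pdual :: "nat \<Rightarrow> (nat set \<Rightarrow> ereal) \<Rightarrow> nat set \<Rightarrow> ereal" where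
  "pdual n p S = p ({1..n} - S)"

definition dvec :: "(nat set \<Rightarrow> ereal) \<Rightarrow> nat set \<Rightarrow> nat \<Rightarrow> ereal" where
  "dvec p T i = (if i \<in> T then p (T - {i}) else \<infinity>)"

definition pluecker_circuit :: "nat \<Rightarrow> (nat set \<Rightarrow> ereal) \<Rightarrow> (nat \<Rightarrow> ereal) \<Rightarrow> bool" where
  "pluecker_circuit n p v \<longleftrightarrow> (\<exists>T (lam::real). T \<subseteq> {1..n} \<and> card T = prank n p + 1 \<and>
     (\<forall>i\<in>{1..n}. v i = dvec p T i + ereal lam) \<and> (\<exists>i\<in>{1..n}. v i \<noteq> \<infinity>))"

definition tls :: "nat \<Rightarrow> (nat set \<Rightarrow> ereal) \<Rightarrow> (nat \<Rightarrow> ereal) set" where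
  "tls n p = {x. (\<forall>i\<in>{1..n}. trop (x i)) \<and>
     (\<forall>v. pluecker_circuit n p v \<longrightarrow> trop_orth {1..n} x v)}"

definition Jset :: "nat \<Rightarrow> (nat + nat) set" where
  "Jset n = Inl ` {1..n} \<union> Inr ` {1..n}"

definition bar :: "nat \<Rightarrow> nat set \<Rightarrow> (nat + nat) set" where
  "bar n S = Inl ` S \<union> Inr ` ({1..n} - S)"

text \<open>pbar (bar S) = p S; on other subsets of J it is irrelevant.\<close>
definition pbar :: "(nat set \<Rightarrow> ereal) \<Rightarrow> (nat + nat) set \<Rightarrow> ereal" where
  "pbar p A = p {i. Inl i \<in> A}"

definition idx :: "nat + nat \<Rightarrow> nat" where
  "idx j = (case j of Inl i \<Rightarrow> i | Inr i \<Rightarrow> i)"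

definition cvec :: "nat \<Rightarrow> (nat set \<Rightarrow> ereal) \<Rightarrow> nat set \<Rightarrow> nat + nat \<Rightarrow> ereal" where
  "cvec n p T j = (if j \<in> bar n T then
      pbar p ((bar n T - {Inl (idx j), Inr (idx j)}) \<union> ({Inl (idx j), Inr (idx j)} - bar n T))
    else \<infinity>)"

definition circuit :: "nat \<Rightarrow> (nat set \<Rightarrow> ereal) \<Rightarrow> (nat + nat \<Rightarrow> ereal) \<Rightarrow> bool" where
  "circuit n p v \<longleftrightarrow> (\<exists>T (lam::real). T \<subseteq> {1..n} \<and>
     (\<forall>j\<in>Jset n. v j = cvec n p T j + ereal lam) \<and> (\<exists>j\<in>Jset n. v j \<noteq> \<infinity>))"

definition circuits_perp :: "nat \<Rightarrow> (nat set \<Rightarrow> ereal) \<Rightarrow> (nat + nat \<Rightarrow> ereal) set" where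
  "circuits_perp n p = {x. (\<forall>j\<in>Jset n. trop (x j)) \<and>
     (\<forall>v. circuit n p v \<longrightarrow> trop_orth (Jset n) x v)}"

end

theory Submission imports Defs begin

text \<open>The circuit c_T of p is the pair (d_T, d*_{[n] - T}) of a Pluecker-circuit vector of p and
  one of its dual p*. Since all supports of p have the same size r, the first half can have a finite
  entry only when |T| = r + 1 and the second only when |T| = r - 1; so every circuit of p is a
  Pluecker circuit of p or of p* padded with \<infinity> on the other half, and conversely. Orthogonality
  to a vector that is \<infinity> on one half only sees the other half.\<close>

lemma min_twice_image_Un_infinite:
  assumes "inj g" "\<forall>b\<in>B. f b = \<infinity>"
  shows "min_twice (g ` A \<union> B) f \<longleftrightarrow> min_twice A (f \<circ> g)"
proof -
  let ?m = "INF k\<in>A. (f \<circ> g) k"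
  have "(INF k\<in>B. f k) = \<infinity>"
    using assms(2) INF_top_conv(1)[where 'a=ereal, unfolded top_ereal_def] by metis
  then have inf: "(INF k\<in>g ` A \<union> B. f k) = ?m"
    by (simp add: INF_union inf_min image_comp)
  show ?thesis
  proof (cases "?m = \<infinity>")
    case False
    then have "(\<exists>i\<in>g ` A \<union> B. \<exists>j\<in>g ` A \<union> B. i \<noteq> j \<and> f i = ?m \<and> f j = ?m) \<longleftrightarrow>
               (\<exists>i\<in>g ` A. \<exists>j\<in>g ` A. i \<noteq> j \<and> f i = ?m \<and> f j = ?m)"
      using assms(2) by auto
    then show ?thesis
      unfolding min_twice_def inf using False inj_eq[OF assms(1)] by auto
  qed (simp add: min_twice_def inf)
qed

lemma trop_orth_case_sum_Inl:
  assumes "\<forall>i\<in>{1..n}. trop (y i)" "\<forall>i\<in>{1..n}. w (Inr i) = \<infinity>"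
  shows "trop_orth (Jset n) (case_sum x y) w \<longleftrightarrow> trop_orth {1..n} x (w \<circ> Inl)"
proof -
  have "min_twice (Inl ` {1..n} \<union> Inr ` {1..n}) (\<lambda>k. case_sum x y k + w k) \<longleftrightarrow>
        min_twice {1..n} ((\<lambda>k. case_sum x y k + w k) \<circ> Inl)"
    by (rule min_twice_image_Un_infinite) (use assms in \<open>auto simp: trop_def\<close>)
  then show ?thesis unfolding trop_orth_def Jset_def by (simp add: comp_def)
qed

lemma trop_orth_case_sum_Inr:
  assumes "\<forall>i\<in>{1..n}. trop (x i)" "\<forall>i\<in>{1..n}. w (Inl i) = \<infinity>"
  shows "trop_orth (Jset n) (case_sum x y) w \<longleftrightarrow> trop_orth {1..n} y (w \<circ> Inr)"
proof -
  have "min_twice (Inr ` {1..n} \<union> Inl ` {1..n}) (\<lambda>k. case_sum x y k + w k) \<longleftrightarrow>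
        min_twice {1..n} ((\<lambda>k. case_sum x y k + w k) \<circ> Inr)"
    by (rule min_twice_image_Un_infinite) (use assms in \<open>auto simp: trop_def\<close>)
  then show ?thesis unfolding trop_orth_def Jset_def by (simp add: comp_def Un_commute)
qed

definition equicard_support :: "nat \<Rightarrow> (nat set \<Rightarrow> ereal) \<Rightarrow> bool" where
  "equicard_support n p \<longleftrightarrow> (\<exists>r. \<forall>S. S \<subseteq> {1..n} \<longrightarrow> p S \<noteq> \<infinity> \<longrightarrow> card S = r)"

lemma trop_pluecker_equicard_support: "trop_pluecker n p \<Longrightarrow> equicard_support n p"
  unfolding trop_pluecker_def equicard_support_def by blast

lemma equicard_support_pdual:
  assumes "equicard_support n p"
  shows "equicard_support n (pdual n p)"
proof -
  obtain r where r: "\<And>S. S \<subseteq> {1..n} \<Longrightarrow> p S \<noteq> \<infinity> \<Longrightarrow> card S = r"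
    using assms unfolding equicard_support_def by blast
  have "card S = n - r" if "S \<subseteq> {1..n}" "pdual n p S \<noteq> \<infinity>" for S
  proof -
    have "card ({1..n} - S) = r" using r[of "{1..n} - S"] that by (auto simp: pdual_def)
    moreover have "card S \<le> n"
      using that(1) by (metis card_atLeastAtMost card_mono diff_Suc_1 finite_atLeastAtMost)
    ultimately show ?thesis using that(1) by (simp add: card_Diff_subset finite_subset)
  qed
  then show ?thesis unfolding equicard_support_def by blast
qed

lemma card_support_eq_prank:
  assumes "equicard_support n p" "S \<subseteq> {1..n}" "p S \<noteq> \<infinity>"
  shows "card S = prank n p"
proof -
  obtain r where r: "\<And>S. S \<subseteq> {1..n} \<Longrightarrow> p S \<noteq> \<infinity> \<Longrightarrow> card S = r"
    using assms(1) unfolding equicard_support_def by blast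
  have "(SOME S. S \<subseteq> {1..n} \<and> p S \<noteq> \<infinity>) \<subseteq> {1..n} \<and> p (SOME S. S \<subseteq> {1..n} \<and> p S \<noteq> \<infinity>) \<noteq> \<infinity>"
    by (rule someI[of _ S]) (use assms in auto)
  then show ?thesis using r assms(2,3) unfolding prank_def by metis
qed

lemma prank_pdual:
  assumes "equicard_support n p" "S \<subseteq> {1..n}" "p S \<noteq> \<infinity>"
  shows "prank n (pdual n p) = n - prank n p"
proof -
  have "pdual n p ({1..n} - S) \<noteq> \<infinity>"
    using assms(2,3) by (simp add: pdual_def Diff_Diff_Int Int_absorb1)
  then have "prank n (pdual n p) = card ({1..n} - S)"
    using card_support_eq_prank[OF equicard_support_pdual[OF assms(1)]] by auto
  also have "\<dots> = n - prank n p"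
    using assms card_support_eq_prank[OF assms] by (simp add: card_Diff_subset finite_subset)
  finally show ?thesis .
qed

lemma card_of_dvec_finite:
  assumes "equicard_support n p" "T \<subseteq> {1..n}" "dvec p T i \<noteq> \<infinity>"
  shows "card T = prank n p + 1"
proof -
  have "i \<in> T" "p (T - {i}) \<noteq> \<infinity>" using assms(3) by (auto simp: dvec_def split: if_splits)
  moreover from this have "card (T - {i}) = prank n p"
    using assms(1,2) by (intro card_support_eq_prank) auto
  ultimately show ?thesis using assms(2)
    by (metis Suc_eq_plus1 card_Suc_Diff1 finite_atLeastAtMost finite_subset)
qed

lemma dvec_pdual_compl_infinite:
  assumes "equicard_support n p" "T \<subseteq> {1..n}" "dvec p T i \<noteq> \<infinity>"
  shows "dvec (pdual n p) ({1..n} - T) j = \<infinity>"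
proof (rule ccontr)
  assume "dvec (pdual n p) ({1..n} - T) j \<noteq> \<infinity>"
  then have "card ({1..n} - T) = prank n (pdual n p) + 1"
    using card_of_dvec_finite[OF equicard_support_pdual[OF assms(1)]] by blast
  moreover have "prank n (pdual n p) = n - prank n p"
    using assms(2,3) by (intro prank_pdual[OF assms(1), of "T - {i}"]) (auto simp: dvec_def split: if_splits)
  moreover have "card ({1..n} - T) = n - (prank n p + 1)"
    using card_of_dvec_finite[OF assms] assms(2) by (simp add: card_Diff_subset finite_subset)
  ultimately show False by linarith
qed

lemma cvec_Inl:
  assumes "T \<subseteq> {1..n}" "i \<in> {1..n}"
  shows "cvec n p T (Inl i) = dvec p T i"
proof -
  have "i \<in> T \<Longrightarrow> {k. Inl k \<in> (bar n T - {Inl i, Inr i}) \<union> ({Inl i, Inr i} - bar n T)} = T - {i}"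
    unfolding bar_def using assms by auto
  then show ?thesis unfolding cvec_def pbar_def idx_def dvec_def by (auto simp: bar_def)
qed

lemma cvec_Inr:
  assumes "T \<subseteq> {1..n}" "i \<in> {1..n}"
  shows "cvec n p T (Inr i) = dvec (pdual n p) ({1..n} - T) i"
proof -
  have "i \<notin> T \<Longrightarrow> {k. Inl k \<in> (bar n T - {Inl i, Inr i}) \<union> ({Inl i, Inr i} - bar n T)} = insert i T"
    unfolding bar_def using assms by auto
  moreover have "i \<notin> T \<Longrightarrow> {1..n} - ({1..n} - T - {i}) = insert i T" using assms by auto
  ultimately show ?thesis
    unfolding cvec_def pbar_def idx_def dvec_def pdual_def using assms by (auto simp: bar_def)
qed

lemma circuit_halves:
  assumes "circuit n p w"
  obtains T lam where "T \<subseteq> {1..n}"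
    "\<And>k. k \<in> {1..n} \<Longrightarrow> w (Inl k) = dvec p T k + ereal lam"
    "\<And>k. k \<in> {1..n} \<Longrightarrow> w (Inr k) = dvec (pdual n p) ({1..n} - T) k + ereal lam"
proof -
  obtain T lam where T: "T \<subseteq> {1..n}" and w: "\<And>j. j \<in> Jset n \<Longrightarrow> w j = cvec n p T j + ereal lam"
    using assms unfolding circuit_def by blast
  show thesis
    by (rule that[OF T]) (use w T in \<open>auto simp: Jset_def cvec_Inl cvec_Inr\<close>)
qed

lemma circuit_Inl_finite:
  assumes "equicard_support n p" "circuit n p w" "i \<in> {1..n}" "w (Inl i) \<noteq> \<infinity>"
  shows "pluecker_circuit n p (w \<circ> Inl) \<and> (\<forall>k\<in>{1..n}. w (Inr k) = \<infinity>)"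
proof -
  obtain T lam where T: "T \<subseteq> {1..n}" and wL: "\<And>k. k \<in> {1..n} \<Longrightarrow> w (Inl k) = dvec p T k + ereal lam"
    and wR: "\<And>k. k \<in> {1..n} \<Longrightarrow> w (Inr k) = dvec (pdual n p) ({1..n} - T) k + ereal lam"
    using circuit_halves[OF assms(2)] by blast
  have "dvec p T i \<noteq> \<infinity>" using assms(3,4) wL by auto
  then have "card T = prank n p + 1" and "dvec (pdual n p) ({1..n} - T) k = \<infinity>" for k
    using card_of_dvec_finite[OF assms(1) T] dvec_pdual_compl_infinite[OF assms(1) T] by blast+
  then show ?thesis
    unfolding pluecker_circuit_def using T assms(3,4) wL wR
    by (intro conjI exI[of _ T] exI[of _ lam]) auto
qed

lemma circuit_Inr_finite:
  assumes "equicard_support n p" "circuit n p w" "i \<in> {1..n}" "w (Inr i) \<noteq> \<infinity>"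
  shows "pluecker_circuit n (pdual n p) (w \<circ> Inr) \<and> (\<forall>k\<in>{1..n}. w (Inl k) = \<infinity>)"
proof -
  obtain T lam where T: "T \<subseteq> {1..n}" and wL: "\<And>k. k \<in> {1..n} \<Longrightarrow> w (Inl k) = dvec p T k + ereal lam"
    and wR: "\<And>k. k \<in> {1..n} \<Longrightarrow> w (Inr k) = dvec (pdual n p) ({1..n} - T) k + ereal lam"
    using circuit_halves[OF assms(2)] by blast
  have "dvec (pdual n p) ({1..n} - T) i \<noteq> \<infinity>" using assms(3,4) wR by auto
  then have "card ({1..n} - T) = prank n (pdual n p) + 1" and "dvec p T k = \<infinity>" for k
    using card_of_dvec_finite[OF equicard_support_pdual[OF assms(1)]]
      dvec_pdual_compl_infinite[OF assms(1) T] by blast+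
  then show ?thesis
    unfolding pluecker_circuit_def using assms(3,4) wL wR
    by (intro conjI exI[of _ "{1..n} - T"] exI[of _ lam]) auto
qed

lemma circuit_of_pluecker_circuit:
  assumes "equicard_support n p" "pluecker_circuit n p v"
  shows "circuit n p (case_sum v (\<lambda>_. \<infinity>))"
proof -
  obtain T lam i where T: "T \<subseteq> {1..n}" and v: "\<And>k. k \<in> {1..n} \<Longrightarrow> v k = dvec p T k + ereal lam"
    and i: "i \<in> {1..n}" "v i \<noteq> \<infinity>"
    using assms(2) unfolding pluecker_circuit_def by blast
  have "dvec (pdual n p) ({1..n} - T) k = \<infinity>" for k
    using dvec_pdual_compl_infinite[OF assms(1) T] i v by force
  then show ?thesis
    unfolding circuit_def using T v i
    by (intro exI[of _ T] exI[of _ lam] conjI bexI[of _ "Inl i"]) (auto simp: Jset_def cvec_Inl cvec_Inr)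
qed

lemma circuit_of_pluecker_circuit_pdual:
  assumes "equicard_support n p" "pluecker_circuit n (pdual n p) v"
  shows "circuit n p (case_sum (\<lambda>_. \<infinity>) v)"
proof -
  obtain T' lam i where T': "T' \<subseteq> {1..n}" and v: "\<And>k. k \<in> {1..n} \<Longrightarrow> v k = dvec (pdual n p) T' k + ereal lam"
    and i: "i \<in> {1..n}" "v i \<noteq> \<infinity>"
    using assms(2) unfolding pluecker_circuit_def by blast
  define T where "T = {1..n} - T'"
  have T: "T \<subseteq> {1..n}" and T': "T' = {1..n} - T" using T' unfolding T_def by auto
  have "dvec p T k = \<infinity>" for k
    using dvec_pdual_compl_infinite[OF assms(1) T, of k i] i v T' by force
  then show ?thesis
    unfolding circuit_def using T T' v i
    by (intro exI[of _ T] exI[of _ lam] conjI bexI[of _ "Inr i"]) (auto simp: Jset_def cvec_Inl cvec_Inr)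
qed

lemma tls_of_circuits_perp:
  assumes "equicard_support n p" "case_sum x y \<in> circuits_perp n p"
  shows "x \<in> tls n p \<and> y \<in> tls n (pdual n p)"
proof -
  have tx: "\<forall>i\<in>{1..n}. trop (x i)" and ty: "\<forall>i\<in>{1..n}. trop (y i)"
    and orth: "\<And>w. circuit n p w \<Longrightarrow> trop_orth (Jset n) (case_sum x y) w"
    using assms(2) unfolding circuits_perp_def Jset_def by force+
  have "trop_orth {1..n} x v" if "pluecker_circuit n p v" for v
    using orth[OF circuit_of_pluecker_circuit[OF assms(1) that]] trop_orth_case_sum_Inl[OF ty]
    by (simp add: case_sum_o_inj)
  moreover have "trop_orth {1..n} y v" if "pluecker_circuit n (pdual n p) v" for v
    using orth[OF circuit_of_pluecker_circuit_pdual[OF assms(1) that]] trop_orth_case_sum_Inr[OF tx]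
    by (simp add: case_sum_o_inj)
  ultimately show ?thesis using tx ty unfolding tls_def by blast
qed

lemma circuits_perp_of_tls:
  assumes "equicard_support n p" "x \<in> tls n p" "y \<in> tls n (pdual n p)"
  shows "case_sum x y \<in> circuits_perp n p"
proof -
  have tx: "\<forall>i\<in>{1..n}. trop (x i)" and ox: "\<And>v. pluecker_circuit n p v \<Longrightarrow> trop_orth {1..n} x v"
    and ty: "\<forall>i\<in>{1..n}. trop (y i)" and oy: "\<And>v. pluecker_circuit n (pdual n p) v \<Longrightarrow> trop_orth {1..n} y v"
    using assms(2,3) unfolding tls_def by auto
  have "trop_orth (Jset n) (case_sum x y) w" if w: "circuit n p w" for w
  proof -
    obtain j where "j \<in> Jset n" "w j \<noteq> \<infinity>" using w unfolding circuit_def by blast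
    then consider i where "i \<in> {1..n}" "w (Inl i) \<noteq> \<infinity>" | i where "i \<in> {1..n}" "w (Inr i) \<noteq> \<infinity>"
      unfolding Jset_def by blast
    then show ?thesis
    proof cases
      case 1
      then show ?thesis using circuit_Inl_finite[OF assms(1) w] ox trop_orth_case_sum_Inl[OF ty] by blast
    next
      case 2
      then show ?thesis using circuit_Inr_finite[OF assms(1) w] oy trop_orth_case_sum_Inr[OF tx] by blast
    qed
  qed
  then show ?thesis using tx ty unfolding circuits_perp_def Jset_def by auto
qed

theorem proposition6p13:
  fixes n :: nat and p :: "nat set \<Rightarrow> ereal"
  assumes "trop_pluecker n p"
  shows "\<forall>x y :: nat \<Rightarrow> ereal. case_sum x y \<in> circuits_perp n p \<longleftrightarrow>
           x \<in> tls n p \<and> y \<in> tls n (pdual n p)"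
  using tls_of_circuits_perp circuits_perp_of_tls trop_pluecker_equicard_support[OF assms] by blast

end
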